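(* Let $A\subseteq\Theta$ be a Borel set with $\Theta_0^\delta\subseteq A$ for some $\delta>0$, and suppose $(\mathcal{H},L)$ has the strong uniform convergence property with respect to $\mathcal{D}$, with strong uniform convergence function $f$. Let $\alpha>0$. Suppose one of the following holds: (a) the risk minimizer $\theta_0\in\arg\min_\Theta R$ exists, an empirical risk minimizer $\widehat{\theta}_S\in\arg\min_\Theta\widehat{R}_S$ exists for every sample $S$, and $\varepsilon(m,\alpha):=\inf\{\varepsilon>0\mid m\ge f(\varepsilon/2,\alpha)\}$; (b) $\varepsilon(m,\alpha):=\inf\{\varepsilon>0\mid m\ge\inf_{0<\delta'<\varepsilon}f((\varepsilon-\delta')/2,\alpha)\}$. Then $$\liminf_{m\to\infty}\Pr_{S\sim\mathcal{D}^m}\big[\mathrm{pl}^{\mathrm{boot},S}_{\varepsilon(m,\alpha)}(A)\ge1-\alpha\big]\ge1-\alpha.$$ Moreover, $\Pr_{S\sim\mathcal{D}^m}[\mathrm{pl}^{\mathrm{boot},S}_{\varepsilon(m,\alpha)}(A)\ge1-\alpha]\ge1-\alpha$ holds for every $m$ with $\varepsilon(m,\alpha)\le\delta$ in case (a), and for every $m$ with $\varepsilon(m,\alpha)\le\delta/2$ in case (b).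
   Context: Setting: data are i.i.d. from a distribution $\mathcal{D}$ on $\mathcal{X}\times\mathcal{Y}$; $\mathcal{H}=\{x\mapsto h(x;\theta)\mid\theta\in\Theta\}$ with $\Theta$ a topological space, $L:\mathcal{Y}\times\mathcal{Y}\to\mathbb{R}$ a loss. For a distribution $\widetilde{\mathcal{D}}$ on $\mathcal{X}\times\mathcal{Y}$ write $R_{\widetilde{\mathcal{D}}}(\theta)=\mathbb{E}_{\widetilde{\mathcal{D}}}[L(h(X;\theta),Y)]$ and $R=R_{\mathcal{D}}$ (assumed finite); for a sample $S=((X_i,Y_i))_{i=1}^m$, $\widehat{R}_S(\theta)=\frac1m\sum_{i=1}^mL(h(X_i;\theta),Y_i)$. All events are assumed measurable. $\widehat{\Theta}_S^\varepsilon=\{\theta\mid\widehat{R}_S(\theta)\le\inf_\vartheta\widehat{R}_S(\vartheta)+\varepsilon\}$, $\Theta_0^\delta=\{\theta\mid R(\theta)\le\inf_\vartheta R(\vartheta)+\delta\}$. Strong uniform convergence property: there is $w:\mathbb{R}^+\times\mathbb{R}^+\to\mathbb{R}$ (a "witness") such that for all $\varepsilon,\alpha>0$ and integers $m\ge w(\varepsilon,\alpha)$: (1) $\Pr_{S\sim\mathcal{D}^m}[\sup_\theta|R(\theta)-\widehat{R}_S(\theta)|\le\varepsilon]\ge1-\alpha$, and (2) $\inf_{\widetilde{\mathcal{D}}\in\mathcal{B}_m}\Pr_{S'\sim\widetilde{\mathcal{D}}^m}[\sup_\theta|R_{\widetilde{\mathcal{D}}}(\theta)-\widehat{R}_{S'}(\theta)|\le\varepsilon]\ge1-\alpha$,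 where $\mathcal{B}_m$ is the set of bootstrap resampling distributions, i.e. the empirical (uniform) distributions $\mathrm{Unif}(S)$ on the points of $S$ for every possible realization $S$ of $\mathcal{D}^m$. The strong uniform convergence function is $f(\varepsilon,\alpha)=\inf_w\lceil w(\varepsilon,\alpha)\rceil$ over all such witnesses. Bootstrapped plausibility: for an observed sample $S$ of size $m$, $\mathrm{pl}^{\mathrm{boot},S}_\varepsilon(A)=\Pr_{S'\sim\mathrm{Unif}(S)^m}[\widehat{\Theta}_{S'}^\varepsilon\cap A\ne\varnothing\mid\widehat{\Theta}_{S'}^\varepsilon\ne\varnothing]$ (the almost-sure limit of $\frac1B\sum_{i=1}^BI(\widehat{\Theta}_{S_i}^\varepsilon\cap A\neq\varnothing)$ over independent resamples $S_i$ with nonempty $\widehat{\Theta}_{S_i}^\varepsilon$), assumed well defined. *)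

theory Defs
  imports "HOL-Probability.Probability"
begin

(* Samples of size m are functions nat => 'x * 'y, extensional on {..<m}. *)

definition sample_dist :: "('x \<times> 'y) measure \<Rightarrow> nat \<Rightarrow> (nat \<Rightarrow> 'x \<times> 'y) measure" where
  "sample_dist D m = PiM {..<m} (\<lambda>_. D)"

definition risk :: "('y \<Rightarrow> 'y \<Rightarrow> real) \<Rightarrow> ('x \<Rightarrow> 'p \<Rightarrow> 'y) \<Rightarrow> ('x \<times> 'y) measure \<Rightarrow> 'p \<Rightarrow> real" where
  "risk L h M th = (\<integral>z. L (h (fst z) th) (snd z) \<partial>M)"

definition emp_risk :: "('y \<Rightarrow> 'y \<Rightarrow> real) \<Rightarrow> ('x \<Rightarrow> 'p \<Rightarrow> 'y) \<Rightarrow> nat \<Rightarrow> (nat \<Rightarrow> 'x \<times> 'y) \<Rightarrow> 'p \<Rightarrow> real" where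
  "emp_risk L h m S th = (1 / real m) * (\<Sum>i<m. L (h (fst (S i)) th) (snd (S i)))"

definition unif_sample :: "nat \<Rightarrow> (nat \<Rightarrow> 'z) \<Rightarrow> 'z pmf" where
  "unif_sample m S = map_pmf S (pmf_of_set {..<m})"

definition boot_dist :: "nat \<Rightarrow> (nat \<Rightarrow> 'z) \<Rightarrow> (nat \<Rightarrow> 'z) pmf" where
  "boot_dist m S = Pi_pmf {..<m} undefined (\<lambda>_. unif_sample m S)"

definition emp_eps_set :: "('y \<Rightarrow> 'y \<Rightarrow> real) \<Rightarrow> ('x \<Rightarrow> 'p \<Rightarrow> 'y) \<Rightarrow> nat \<Rightarrow> (nat \<Rightarrow> 'x \<times> 'y) \<Rightarrow> real \<Rightarrow> 'p set" where
  "emp_eps_set L h m S eps =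
     {th. ereal (emp_risk L h m S th) \<le> (INF v. ereal (emp_risk L h m S v)) + ereal eps}"

definition risk_delta_set :: "('y \<Rightarrow> 'y \<Rightarrow> real) \<Rightarrow> ('x \<Rightarrow> 'p \<Rightarrow> 'y) \<Rightarrow> ('x \<times> 'y) measure \<Rightarrow> real \<Rightarrow> 'p set" where
  "risk_delta_set L h D del =
     {th. ereal (risk L h D th) \<le> (INF v. ereal (risk L h D v)) + ereal del}"

definition pl_boot :: "('y \<Rightarrow> 'y \<Rightarrow> real) \<Rightarrow> ('x \<Rightarrow> 'p \<Rightarrow> 'y) \<Rightarrow> nat \<Rightarrow> (nat \<Rightarrow> 'x \<times> 'y) \<Rightarrow> real \<Rightarrow> 'p set \<Rightarrow> real" where
  "pl_boot L h m S eps A =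
     measure_pmf.prob (boot_dist m S)
        {S'. emp_eps_set L h m S' eps \<inter> A \<noteq> {} \<and> emp_eps_set L h m S' eps \<noteq> {}}
     / measure_pmf.prob (boot_dist m S) {S'. emp_eps_set L h m S' eps \<noteq> {}}"

definition suc_witness :: "('x \<times> 'y) measure \<Rightarrow> ('y \<Rightarrow> 'y \<Rightarrow> real) \<Rightarrow> ('x \<Rightarrow> 'p \<Rightarrow> 'y)
    \<Rightarrow> (real \<Rightarrow> real \<Rightarrow> real) \<Rightarrow> bool" where
  "suc_witness D L h w \<longleftrightarrow>
     (\<forall>eps>0. \<forall>\<alpha>>0. \<forall>m::nat. real m \<ge> w eps \<alpha> \<longrightarrow>
        measure (sample_dist D m)
          {S \<in> space (sample_dist D m). \<forall>th. \<bar>risk L h D th - emp_risk L h m S th\<bar> \<le> eps}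
          \<ge> 1 - \<alpha>
      \<and> (\<forall>S \<in> space (sample_dist D m).
          measure_pmf.prob (boot_dist m S)
            {S'. \<forall>th. \<bar>risk L h (measure_pmf (unif_sample m S)) th - emp_risk L h m S' th\<bar> \<le> eps}
          \<ge> 1 - \<alpha>))"

definition has_suc :: "('x \<times> 'y) measure \<Rightarrow> ('y \<Rightarrow> 'y \<Rightarrow> real) \<Rightarrow> ('x \<Rightarrow> 'p \<Rightarrow> 'y) \<Rightarrow> bool" where
  "has_suc D L h \<longleftrightarrow> (\<exists>w. suc_witness D L h w)"

text \<open>Strong uniform convergence function f (an extended real; -\<infinity> is possible in degenerate cases).\<close>
definition suc_fun :: "('x \<times> 'y) measure \<Rightarrow> ('y \<Rightarrow> 'y \<Rightarrow> real) \<Rightarrow> ('x \<Rightarrow> 'p \<Rightarrow> 'y)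
    \<Rightarrow> real \<Rightarrow> real \<Rightarrow> ereal" where
  "suc_fun D L h eps \<alpha> = (INF w \<in> {w. suc_witness D L h w}. ereal (of_int \<lceil>w eps \<alpha>\<rceil>))"

text \<open>eps(m,alpha) in case (a) and case (b); Inf of the empty set is +\<infinity>.\<close>
definition eps_a :: "(real \<Rightarrow> real \<Rightarrow> ereal) \<Rightarrow> nat \<Rightarrow> real \<Rightarrow> ereal" where
  "eps_a f m \<alpha> = Inf {ereal e | e. e > 0 \<and> ereal (real m) \<ge> f (e / 2) \<alpha>}"

definition eps_b :: "(real \<Rightarrow> real \<Rightarrow> ereal) \<Rightarrow> nat \<Rightarrow> real \<Rightarrow> ereal" where
  "eps_b f m \<alpha> = Inf {ereal e | e. e > 0 \<and>
      ereal (real m) \<ge> (INF d \<in> {0<..<e}. f ((e - d) / 2) \<alpha>)}"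

end

theory Submission
  imports Defs
begin

text \<open>
  On the event that the sample S is uniformly eps/2-close to D, which has probability at least
  1 - alpha, every bootstrap resample S' that is uniformly eps/2-close to S, which has bootstrap
  probability at least 1 - alpha, has empirical risk uniformly eps-close to the risk. Some
  eps-near-minimiser of the empirical risk of S' is then a delta-near-minimiser of the risk and so
  lies in A; hence pl is at least 1 - alpha. The accuracy eps(m,alpha)/2 itself, not only every
  larger one, is guaranteed because the probability of a uniform deviation at most c is
  right-continuous in c.

  In case (b) only approximate minimisers are available, which costs the factor 2 in
  eps <= delta/2, and the infimum of the risk must be finite, which follows from the positivity of
  the bootstrap probability of a nonempty near-minimiser set. The degenerate value eps(m,alpha) = 0
  needs exact minimisers; it forces the loss to be independent of the data point, because the
  bootstrap of a sample with two distinct loss values reproduces its empirical risk only with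
  probability at most C(2k,k)/4^k.
\<close>

section \<open>Near-minimiser sets\<close>

text \<open>As in emp_eps_set and risk_delta_set the infimum is taken in the extended reals, so
  near_argmin r e is empty when r is unbounded below.\<close>
definition near_argmin :: "('p \<Rightarrow> real) \<Rightarrow> real \<Rightarrow> 'p set" where
  "near_argmin r e = {\<theta>. ereal (r \<theta>) \<le> (INF v. ereal (r v)) + ereal e}"

lemma emp_eps_set_eq_near_argmin: "emp_eps_set L h m S e = near_argmin (emp_risk L h m S) e"
  by (simp add: emp_eps_set_def near_argmin_def)

lemma risk_delta_set_eq_near_argmin: "risk_delta_set L h D \<delta> = near_argmin (risk L h D) \<delta>"
  by (simp add: risk_delta_set_def near_argmin_def)

lemma near_argmin_bdd_below:
  assumes "bdd_below (range r)"
  shows "near_argmin r e = {\<theta>. r \<theta> \<le> (INF v. r v) + e}"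
proof -
  have "(INF v. ereal (r v)) = ereal (INF v. r v)"
    using ereal_Inf'[OF assms] by (simp add: image_comp)
  then show ?thesis
    by (simp add: near_argmin_def)
qed

lemma bdd_below_if_near_argmin_nonempty:
  assumes "near_argmin r e \<noteq> {}"
  shows "bdd_below (range r)"
proof -
  obtain \<theta> where "ereal (r \<theta>) \<le> (INF v. ereal (r v)) + ereal e"
    using assms by (auto simp: near_argmin_def)
  then have "ereal (r \<theta> - e) \<le> (INF v. ereal (r v))"
    by (cases "INF v. ereal (r v)") auto
  then have "r \<theta> - e \<le> r v" for v
    by (metis INF_lower UNIV_I ereal_less_eq(3) order_trans)
  then show ?thesis
    by (intro bdd_belowI2)
qed

lemma near_argmin_zero_nonempty_iff: "near_argmin r 0 \<noteq> {} \<longleftrightarrow> (\<exists>t. \<forall>\<theta>. r t \<le> r \<theta>)"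
proof
  assume "near_argmin r 0 \<noteq> {}"
  then obtain t where "ereal (r t) \<le> (INF v. ereal (r v))"
    by (auto simp: near_argmin_def)
  then show "\<exists>t. \<forall>\<theta>. r t \<le> r \<theta>"
    by (metis INF_lower UNIV_I ereal_less_eq(3) order_trans)
next
  assume "\<exists>t. \<forall>\<theta>. r t \<le> r \<theta>"
  then obtain t where "\<forall>\<theta>. r t \<le> r \<theta>" ..
  then have "t \<in> near_argmin r 0"
    by (auto simp: near_argmin_def intro!: INF_greatest)
  then show "near_argmin r 0 \<noteq> {}"
    by blast
qed

lemma bdd_below_range_if_close:
  fixes r r' :: "'p \<Rightarrow> real"
  assumes "bdd_below (range r)" "\<And>\<theta>. \<bar>r \<theta> - r' \<theta>\<bar> \<le> e"
  shows "bdd_below (range r')"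
proof -
  obtain b where "\<And>\<theta>. b \<le> r \<theta>"
    using assms(1) by (auto simp: bdd_below_def)
  then have "\<And>\<theta>. b - e \<le> r' \<theta>"
    using assms(2) by (smt (verit))
  then show ?thesis
    by (intro bdd_belowI2)
qed

text \<open>Either the approximate minimiser t of r is good enough for r', or r' strictly prefers its own
  approximate minimiser t', which is then a near-minimiser of r as well.\<close>
lemma near_argmin_meets:
  fixes r r' :: "'p \<Rightarrow> real"
  assumes bdd: "bdd_below (range r)" and close: "\<And>\<theta>. \<bar>r \<theta> - r' \<theta>\<bar> \<le> e"
    and t: "r t \<le> (INF v. r v) + \<eta>" and t': "r' t' \<le> (INF v. r' v) + \<eta>"
    and "\<eta> \<le> e" "e + 2 * \<eta> \<le> \<delta>" and A: "near_argmin r \<delta> \<subseteq> A"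
  shows "near_argmin r' e \<inter> A \<noteq> {}"
proof -
  have bdd': "bdd_below (range r')"
    using bdd close by (rule bdd_below_range_if_close)
  have "(INF v. r v) \<le> r t"
    using bdd by (rule cINF_lower) simp
  then have "0 \<le> \<eta>"
    using t by linarith
  show ?thesis
  proof (cases "r' t \<le> (INF v. r' v) + e")
    case True
    then have "t \<in> near_argmin r' e"
      using bdd' by (simp add: near_argmin_bdd_below)
    moreover have "t \<in> A"
      using A t \<open>0 \<le> \<eta>\<close> assms(5,6) bdd by (auto simp: near_argmin_bdd_below)
    ultimately show ?thesis
      by blast
  next
    case False
    have "r t' \<le> (INF v. r v) + \<delta>"
      using close[of t] close[of t'] t t' False assms(5,6) by linarith
    then have "t' \<in> A"
      using A bdd by (auto simp: near_argmin_bdd_below)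
    moreover have "t' \<in> near_argmin r' e"
      using t' \<open>\<eta> \<le> e\<close> bdd' by (simp add: near_argmin_bdd_below)
    ultimately show ?thesis
      by blast
  qed
qed

lemma near_argmin_meets_if_minimizers:
  fixes r r' :: "'p \<Rightarrow> real"
  assumes "\<And>\<theta>. r t \<le> r \<theta>" "\<And>\<theta>. r' t' \<le> r' \<theta>" "\<And>\<theta>. \<bar>r \<theta> - r' \<theta>\<bar> \<le> e"
    and "e \<le> \<delta>" "near_argmin r \<delta> \<subseteq> A"
  shows "near_argmin r' e \<inter> A \<noteq> {}"
proof (rule near_argmin_meets)
  have "(INF v. r v) = r t" "(INF v. r' v) = r' t'"
    using assms(1,2) by (auto intro: cInf_eq_minimum)
  then show "r t \<le> (INF v. r v) + 0" "r' t' \<le> (INF v. r' v) + 0"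
    by simp_all
  show "bdd_below (range r)"
    using assms(1) by (intro bdd_belowI2)
  show "0 \<le> e"
    using assms(3) by (meson abs_ge_zero order_trans)
qed (use assms in auto)

lemma near_argmin_meets_if_bdd_below:
  fixes r r' :: "'p \<Rightarrow> real"
  assumes "bdd_below (range r)" "\<And>\<theta>. \<bar>r \<theta> - r' \<theta>\<bar> \<le> e"
    and "0 < e" "2 * e \<le> \<delta>" "near_argmin r \<delta> \<subseteq> A"
  shows "near_argmin r' e \<inter> A \<noteq> {}"
proof -
  have "bdd_below (range r')"
    using assms(1,2) by (rule bdd_below_range_if_close)
  then obtain t t' where "r t < (INF v. r v) + e / 2" "r' t' < (INF v. r' v) + e / 2"
    using assms(1,3) by (metis cINF_less_iff UNIV_I UNIV_not_empty half_gt_zero less_add_same_cancel1)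
  then show ?thesis
    using assms by (intro near_argmin_meets[where \<eta> = "e / 2" and t = t and t' = t']) auto
qed

section \<open>Samples and bootstrap resamples\<close>

lemma prob_space_sample_dist: "prob_space D \<Longrightarrow> prob_space (sample_dist D m)"
  unfolding sample_dist_def by (intro prob_space_PiM) auto

lemma space_sample_dist: "space (sample_dist D m) = (\<Pi>\<^sub>E i\<in>{..<m}. space D)"
  by (simp add: sample_dist_def space_PiM)

lemma set_pmf_boot_dist:
  assumes "m > 0"
  shows "set_pmf (boot_dist m S) = PiE_dflt {..<m} undefined (\<lambda>_. S ` {..<m})"
proof -
  have "set_pmf (pmf_of_set {..<m}) = {..<m}"
    using assms by (intro set_pmf_of_set) (auto simp: lessThan_empty_iff)
  then show ?thesis
    by (simp add: boot_dist_def unif_sample_def set_Pi_pmf o_def)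
qed

lemma boot_dist_in_space:
  assumes "S \<in> space (sample_dist D m)" "S' \<in> set_pmf (boot_dist m S)"
  shows "S' \<in> space (sample_dist D m)"
proof (cases "m = 0")
  case True
  then show ?thesis
    using assms(2) by (simp add: boot_dist_def space_sample_dist)
next
  case False
  then have S': "S' \<in> PiE_dflt {..<m} undefined (\<lambda>_. S ` {..<m})"
    using assms(2) by (simp add: set_pmf_boot_dist)
  show ?thesis
    unfolding space_sample_dist
  proof (rule PiE_I)
    fix i assume "i \<in> {..<m}"
    then obtain j where "j < m" "S' i = S j"
      using S' by (auto simp: PiE_dflt_def)
    then show "S' i \<in> space D"
      using assms(1) by (auto simp: space_sample_dist)
  qed (use S' in \<open>auto simp: PiE_dflt_def\<close>)
qed

lemma risk_unif_sample:
  assumes "m > 0"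
  shows "risk L h (measure_pmf (unif_sample m S)) \<theta> = emp_risk L h m S \<theta>"
proof -
  have "measure_pmf.expectation (pmf_of_set {..<m}) f = sum f {..<m} / m" for f :: "nat \<Rightarrow> real"
    using assms by (subst integral_pmf_of_set) (auto simp: lessThan_empty_iff)
  then show ?thesis
    by (simp add: risk_def unif_sample_def emp_risk_def)
qed

lemma exists_in_set_pmf_if_prob_pos:
  assumes "0 < measure_pmf.prob p E"
  obtains x where "x \<in> set_pmf p" "x \<in> E"
  using assms measure_pmf_zero_iff[of p E] by auto

section \<open>Accuracy guaranteed by strong uniform convergence\<close>

lemma measure_sup_le_right_continuous:
  fixes g :: "'a \<Rightarrow> 'b \<Rightarrow> real"
  assumes "finite_measure M" and meas: "\<And>c. {x \<in> space M. \<forall>\<theta>. g x \<theta> \<le> c} \<in> sets M"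
    and bound: "\<And>c. c0 < c \<Longrightarrow> a \<le> measure M {x \<in> space M. \<forall>\<theta>. g x \<theta> \<le> c}"
  shows "a \<le> measure M {x \<in> space M. \<forall>\<theta>. g x \<theta> \<le> c0}"
proof -
  interpret finite_measure M by fact
  define X where "X n = {x \<in> space M. \<forall>\<theta>. g x \<theta> \<le> c0 + 1 / Suc n}" for n
  have "(\<Inter>n. X n) = {x \<in> space M. \<forall>\<theta>. g x \<theta> \<le> c0}"
  proof (intro equalityI subsetI)
    fix x assume x: "x \<in> (\<Inter>n. X n)"
    have "g x \<theta> \<le> c0" for \<theta>
    proof (rule field_le_epsilon)
      fix e :: real assume "0 < e"
      then obtain n where "1 / Suc n < e"
        using nat_approx_posE by blast
      moreover have "g x \<theta> \<le> c0 + 1 / Suc n"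
        using x by (simp add: X_def)
      ultimately show "g x \<theta> \<le> c0 + e"
        by linarith
    qed
    then show "x \<in> {x \<in> space M. \<forall>\<theta>. g x \<theta> \<le> c0}"
      using x by (simp add: X_def)
  qed (auto simp: X_def intro: add_increasing2)
  moreover have "decseq X"
  proof (rule decseq_SucI)
    fix n
    have "1 / Suc (Suc n) \<le> 1 / Suc n"
      by (simp add: frac_le)
    then show "X (Suc n) \<subseteq> X n"
      unfolding X_def by (smt (verit) Collect_mono_iff)
  qed
  then have "(\<lambda>n. measure M (X n)) \<longlonglongrightarrow> measure M (\<Inter>n. X n)"
    using meas unfolding X_def by (intro finite_Lim_measure_decseq) auto
  moreover have "a \<le> measure M (X n)" for n
    unfolding X_def by (rule bound) simp
  ultimately show ?thesis
    by (metis LIMSEQ_le_const)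
qed

definition unif_dev_event ::
    "('x \<times> 'y) measure \<Rightarrow> ('y \<Rightarrow> 'y \<Rightarrow> real) \<Rightarrow> ('x \<Rightarrow> 'p \<Rightarrow> 'y) \<Rightarrow> nat \<Rightarrow> real \<Rightarrow> (nat \<Rightarrow> 'x \<times> 'y) set"
  where "unif_dev_event D L h m c =
    {S \<in> space (sample_dist D m). \<forall>\<theta>. \<bar>risk L h D \<theta> - emp_risk L h m S \<theta>\<bar> \<le> c}"

definition boot_dev_event ::
    "('y \<Rightarrow> 'y \<Rightarrow> real) \<Rightarrow> ('x \<Rightarrow> 'p \<Rightarrow> 'y) \<Rightarrow> nat \<Rightarrow> (nat \<Rightarrow> 'x \<times> 'y) \<Rightarrow> real \<Rightarrow> (nat \<Rightarrow> 'x \<times> 'y) set"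
  where "boot_dev_event L h m S c = {S'. \<forall>\<theta>. \<bar>emp_risk L h m S \<theta> - emp_risk L h m S' \<theta>\<bar> \<le> c}"

text \<open>Conditions (1) and (2) of the strong uniform convergence property at accuracy c and sample
  size m; by risk_unif_sample the risk under Unif(S) in (2) is the empirical risk of S.\<close>
definition suc_accuracy ::
    "('x \<times> 'y) measure \<Rightarrow> ('y \<Rightarrow> 'y \<Rightarrow> real) \<Rightarrow> ('x \<Rightarrow> 'p \<Rightarrow> 'y) \<Rightarrow> real \<Rightarrow> real \<Rightarrow> nat \<Rightarrow> bool"
  where "suc_accuracy D L h \<alpha> c m \<longleftrightarrow>
    1 - \<alpha> \<le> measure (sample_dist D m) (unif_dev_event D L h m c) \<and>
    (\<forall>S \<in> space (sample_dist D m). 1 - \<alpha> \<le> measure_pmf.prob (boot_dist m S) (boot_dev_event L h m S c))"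

lemma suc_accuracy_if_witness:
  assumes "suc_witness D L h w" "0 < c" "0 < \<alpha>" "w c \<alpha> \<le> real m"
  shows "suc_accuracy D L h \<alpha> c m"
proof -
  have unif: "1 - \<alpha> \<le> measure (sample_dist D m) (unif_dev_event D L h m c)"
    and boot: "\<And>S. S \<in> space (sample_dist D m) \<Longrightarrow> 1 - \<alpha> \<le> measure_pmf.prob (boot_dist m S)
      {S'. \<forall>\<theta>. \<bar>risk L h (measure_pmf (unif_sample m S)) \<theta> - emp_risk L h m S' \<theta>\<bar> \<le> c}"
    using assms unfolding suc_witness_def unif_dev_event_def by blast+
  show ?thesis
  proof (cases "m = 0")
    case True
    text \<open>Here Unif(S) is built from the junk value pmf_of_set {}, but both empirical risks vanish.\<close>
    then have "boot_dev_event L h m S c = UNIV" for S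
      using \<open>0 < c\<close> by (auto simp: boot_dev_event_def emp_risk_def)
    then show ?thesis
      using unif \<open>0 < \<alpha>\<close> by (simp add: suc_accuracy_def)
  next
    case False
    then show ?thesis
      using unif boot by (simp add: suc_accuracy_def boot_dev_event_def risk_unif_sample)
  qed
qed

lemma suc_accuracy_mono:
  assumes D: "prob_space D" and "c \<le> c'" "suc_accuracy D L h \<alpha> c m"
    and meas: "unif_dev_event D L h m c' \<in> sets (sample_dist D m)"
  shows "suc_accuracy D L h \<alpha> c' m"
proof -
  interpret prob_space "sample_dist D m"
    using D by (rule prob_space_sample_dist)
  have "measure (sample_dist D m) (unif_dev_event D L h m c) \<le> measure (sample_dist D m) (unif_dev_event D L h m c')"
    using \<open>c \<le> c'\<close> by (intro finite_measure_mono meas) (auto simp: unif_dev_event_def dest: order_trans)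
  moreover have "measure_pmf.prob (boot_dist m S) (boot_dev_event L h m S c)
      \<le> measure_pmf.prob (boot_dist m S) (boot_dev_event L h m S c')" for S
    using \<open>c \<le> c'\<close> by (intro measure_pmf.finite_measure_mono) (auto simp: boot_dev_event_def dest: order_trans)
  ultimately show ?thesis
    using assms(3) unfolding suc_accuracy_def by (meson order_trans)
qed

lemma suc_accuracy_right_limit:
  assumes D: "prob_space D" and meas: "\<And>c. unif_dev_event D L h m c \<in> sets (sample_dist D m)"
    and acc: "\<And>c. c0 < c \<Longrightarrow> suc_accuracy D L h \<alpha> c m"
  shows "suc_accuracy D L h \<alpha> c0 m"
  unfolding suc_accuracy_def
proof (intro conjI ballI)
  have "finite_measure (sample_dist D m)"
    using prob_space_sample_dist[OF D] by (simp add: prob_space_def)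
  then show "1 - \<alpha> \<le> measure (sample_dist D m) (unif_dev_event D L h m c0)"
    using meas acc measure_sup_le_right_continuous[where g = "\<lambda>S \<theta>. \<bar>risk L h D \<theta> - emp_risk L h m S \<theta>\<bar>"]
    unfolding unif_dev_event_def suc_accuracy_def by blast
next
  fix S assume "S \<in> space (sample_dist D m)"
  then show "1 - \<alpha> \<le> measure_pmf.prob (boot_dist m S) (boot_dev_event L h m S c0)"
    using acc measure_sup_le_right_continuous[OF measure_pmf.finite_measure_axioms,
        where g = "\<lambda>S' \<theta>. \<bar>emp_risk L h m S \<theta> - emp_risk L h m S' \<theta>\<bar>"]
    unfolding boot_dev_event_def suc_accuracy_def by simp
qed

lemma witness_if_suc_fun_less:
  assumes "suc_fun D L h c \<alpha> < ereal (real m + 1)"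
  obtains w where "suc_witness D L h w" "w c \<alpha> \<le> real m"
proof -
  obtain w where "suc_witness D L h w" "\<lceil>w c \<alpha>\<rceil> < int m + 1"
    using assms unfolding suc_fun_def by (auto simp: INF_less_iff)
  moreover from this(2) have "w c \<alpha> \<le> real m"
    by (metis ceiling_le_iff of_int_of_nat_eq zle_add1_eq_le)
  ultimately show ?thesis
    using that by blast
qed

lemma suc_fun_le_if_witness:
  assumes "suc_witness D L h w" "w c \<alpha> \<le> real m"
  shows "suc_fun D L h c \<alpha> \<le> ereal (real m)"
proof -
  have "suc_fun D L h c \<alpha> \<le> ereal (of_int \<lceil>w c \<alpha>\<rceil>)"
    unfolding suc_fun_def using assms(1) by (intro INF_lower) simp
  also have "\<dots> \<le> ereal (real m)"
  proof -
    have "\<lceil>w c \<alpha>\<rceil> \<le> int m"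
      using assms(2) by (simp add: ceiling_le_iff)
    then show ?thesis
      by (metis ereal_less_eq(3) of_int_le_iff of_int_of_nat_eq)
  qed
  finally show ?thesis .
qed

lemma suc_accuracy_above_eps_a:
  assumes D: "prob_space D" and meas: "\<And>c. unif_dev_event D L h m' c \<in> sets (sample_dist D m')"
    and eps: "eps_a (suc_fun D L h) m \<alpha> = ereal \<epsilon>" and "\<epsilon> / 2 < c" "m \<le> m'" "0 < \<alpha>"
  shows "suc_accuracy D L h \<alpha> c m'"
proof -
  have "eps_a (suc_fun D L h) m \<alpha> < ereal (2 * c)"
    using eps \<open>\<epsilon> / 2 < c\<close> by simp
  then obtain e where e: "0 < e" "suc_fun D L h (e / 2) \<alpha> \<le> ereal (real m)" "e < 2 * c"
    unfolding eps_a_def by (auto simp: Inf_less_iff)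
  then have "suc_fun D L h (e / 2) \<alpha> < ereal (real m + 1)"
    by (simp add: le_less_trans)
  then obtain w where "suc_witness D L h w" "w (e / 2) \<alpha> \<le> real m"
    by (rule witness_if_suc_fun_less)
  then have "suc_accuracy D L h \<alpha> (e / 2) m'"
    using e \<open>0 < \<alpha>\<close> \<open>m \<le> m'\<close> by (intro suc_accuracy_if_witness) auto
  then show ?thesis
    by (rule suc_accuracy_mono[OF D _ _ meas, rotated]) (use e in linarith)
qed

lemma suc_accuracy_above_eps_b:
  assumes D: "prob_space D" and meas: "\<And>c. unif_dev_event D L h m' c \<in> sets (sample_dist D m')"
    and eps: "eps_b (suc_fun D L h) m \<alpha> = ereal \<epsilon>" and "\<epsilon> / 2 < c" "m \<le> m'" "0 < \<alpha>"
  shows "suc_accuracy D L h \<alpha> c m'"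
proof -
  have "eps_b (suc_fun D L h) m \<alpha> < ereal (2 * c)"
    using eps \<open>\<epsilon> / 2 < c\<close> by simp
  then obtain e where e: "0 < e" "e < 2 * c"
      "(INF d \<in> {0<..<e}. suc_fun D L h ((e - d) / 2) \<alpha>) \<le> ereal (real m)"
    unfolding eps_b_def by (auto simp: Inf_less_iff)
  then have "(INF d \<in> {0<..<e}. suc_fun D L h ((e - d) / 2) \<alpha>) < ereal (real m + 1)"
    by (simp add: le_less_trans)
  then obtain d where d: "0 < d" "d < e" "suc_fun D L h ((e - d) / 2) \<alpha> < ereal (real m + 1)"
    by (auto simp: INF_less_iff)
  then obtain w where "suc_witness D L h w" "w ((e - d) / 2) \<alpha> \<le> real m"
    using witness_if_suc_fun_less by blast
  then have "suc_accuracy D L h \<alpha> ((e - d) / 2) m'"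
    using d \<open>0 < \<alpha>\<close> \<open>m \<le> m'\<close> by (intro suc_accuracy_if_witness) auto
  then show ?thesis
    by (rule suc_accuracy_mono[OF D _ _ meas, rotated]) (use e d in simp)
qed

lemma suc_accuracy_eps_a:
  assumes "prob_space D" "\<And>c. unif_dev_event D L h m c \<in> sets (sample_dist D m)"
    and "eps_a (suc_fun D L h) m \<alpha> = ereal \<epsilon>" "0 < \<alpha>"
  shows "suc_accuracy D L h \<alpha> (\<epsilon> / 2) m"
proof (rule suc_accuracy_right_limit[OF assms(1,2)])
  fix c assume "\<epsilon> / 2 < c"
  then show "suc_accuracy D L h \<alpha> c m"
    by (rule suc_accuracy_above_eps_a[OF assms(1,2,3) _ order_refl assms(4)])
qed

lemma suc_accuracy_eps_b:
  assumes "prob_space D" "\<And>c. unif_dev_event D L h m c \<in> sets (sample_dist D m)"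
    and "eps_b (suc_fun D L h) m \<alpha> = ereal \<epsilon>" "0 < \<alpha>"
  shows "suc_accuracy D L h \<alpha> (\<epsilon> / 2) m"
proof (rule suc_accuracy_right_limit[OF assms(1,2)])
  fix c assume "\<epsilon> / 2 < c"
  then show "suc_accuracy D L h \<alpha> c m"
    by (rule suc_accuracy_above_eps_b[OF assms(1,2,3) _ order_refl assms(4)])
qed

lemma eps_a_nonneg: "0 \<le> eps_a f m \<alpha>"
  unfolding eps_a_def by (rule Inf_greatest) auto

lemma eps_b_nonneg: "0 \<le> eps_b f m \<alpha>"
  unfolding eps_b_def by (rule Inf_greatest) auto

lemma eps_a_le_if_witness:
  assumes "suc_witness D L h w" "0 < e" "w (e / 2) \<alpha> \<le> real m"
  shows "eps_a (suc_fun D L h) m \<alpha> \<le> ereal e"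
  unfolding eps_a_def using assms suc_fun_le_if_witness by (intro Inf_lower) blast

lemma eps_b_le_if_witness:
  assumes "suc_witness D L h w" "0 < d" "d < e" "w ((e - d) / 2) \<alpha> \<le> real m"
  shows "eps_b (suc_fun D L h) m \<alpha> \<le> ereal e"
proof -
  have "(INF d' \<in> {0<..<e}. suc_fun D L h ((e - d') / 2) \<alpha>) \<le> suc_fun D L h ((e - d) / 2) \<alpha>"
    using assms(2,3) by (intro INF_lower) simp
  also have "\<dots> \<le> ereal (real m)"
    using assms(1,4) by (rule suc_fun_le_if_witness)
  finally show ?thesis
    unfolding eps_b_def using assms(2,3) by (intro Inf_lower) auto
qed

lemma eventually_eps_a_le:
  assumes "has_suc D L h" "0 < e"
  shows "\<forall>\<^sub>F m in sequentially. eps_a (suc_fun D L h) m \<alpha> \<le> ereal e"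
proof -
  obtain w where "suc_witness D L h w"
    using assms(1) by (auto simp: has_suc_def)
  then have "w (e / 2) \<alpha> \<le> real m \<Longrightarrow> eps_a (suc_fun D L h) m \<alpha> \<le> ereal e" for m
    using assms(2) by (rule eps_a_le_if_witness)
  moreover have "\<forall>\<^sub>F m in sequentially. w (e / 2) \<alpha> \<le> real m"
    using filterlim_real_sequentially by (simp add: filterlim_at_top)
  ultimately show ?thesis
    by (simp add: eventually_mono)
qed

lemma eventually_eps_b_le:
  assumes "has_suc D L h" "0 < e"
  shows "\<forall>\<^sub>F m in sequentially. eps_b (suc_fun D L h) m \<alpha> \<le> ereal e"
proof -
  obtain w where "suc_witness D L h w"
    using assms(1) by (auto simp: has_suc_def)
  then have "w ((e - e / 2) / 2) \<alpha> \<le> real m \<Longrightarrow> eps_b (suc_fun D L h) m \<alpha> \<le> ereal e" for m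
    by (rule eps_b_le_if_witness[where d = "e / 2"]) (use assms(2) in simp_all)
  moreover have "\<forall>\<^sub>F m in sequentially. w ((e - e / 2) / 2) \<alpha> \<le> real m"
    using filterlim_real_sequentially by (simp only: filterlim_at_top)
  ultimately show ?thesis
    by (simp add: eventually_mono)
qed

lemma liminf_ge_if_eventually:
  assumes "\<And>m. Q m \<Longrightarrow> a \<le> P m" "\<forall>\<^sub>F m in sequentially. Q m"
  shows "ereal a \<le> liminf (\<lambda>m. ereal (P m))"
  using assms(2) by (intro Liminf_bounded) (simp add: assms(1) eventually_mono)

section \<open>Bootstrapped plausibility\<close>

lemma prob_le_pl_boot:
  assumes "\<And>S'. S' \<in> set_pmf (boot_dist m S) \<Longrightarrow> S' \<in> E \<Longrightarrow> emp_eps_set L h m S' \<epsilon> \<inter> A \<noteq> {}"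
  shows "measure_pmf.prob (boot_dist m S) E \<le> pl_boot L h m S \<epsilon> A"
proof -
  let ?p = "boot_dist m S"
  let ?N = "{S'. emp_eps_set L h m S' \<epsilon> \<inter> A \<noteq> {} \<and> emp_eps_set L h m S' \<epsilon> \<noteq> {}}"
  let ?C = "{S'. emp_eps_set L h m S' \<epsilon> \<noteq> {}}"
  have "measure_pmf.prob ?p E = measure_pmf.prob ?p (E \<inter> set_pmf ?p)"
    by (simp add: measure_Int_set_pmf)
  also have "\<dots> \<le> measure_pmf.prob ?p ?N"
    using assms by (intro measure_pmf.finite_measure_mono) auto
  also have "\<dots> \<le> measure_pmf.prob ?p ?N / measure_pmf.prob ?p ?C"
  proof -
    have "measure_pmf.prob ?p ?N \<le> measure_pmf.prob ?p ?C"
      by (intro measure_pmf.finite_measure_mono) auto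
    moreover have "measure_pmf.prob ?p ?C \<le> 1"
      by (rule measure_pmf.prob_le_1)
    ultimately show ?thesis
      by (cases "measure_pmf.prob ?p ?C = 0") (simp_all add: le_divide_eq mult_left_le)
  qed
  also have "\<dots> = pl_boot L h m S \<epsilon> A"
    by (simp add: pl_boot_def)
  finally show ?thesis .
qed

lemma prob_pl_boot_ge_if_accuracy:
  assumes D: "prob_space D" and acc: "suc_accuracy D L h \<alpha> (\<epsilon> / 2) m"
    and meas: "{S \<in> space (sample_dist D m). 1 - \<alpha> \<le> pl_boot L h m S \<epsilon> A} \<in> sets (sample_dist D m)"
    and good: "\<And>S S'. S \<in> space (sample_dist D m) \<Longrightarrow> S' \<in> set_pmf (boot_dist m S) \<Longrightarrow>
        (\<And>\<theta>. \<bar>risk L h D \<theta> - emp_risk L h m S' \<theta>\<bar> \<le> \<epsilon>) \<Longrightarrow> emp_eps_set L h m S' \<epsilon> \<inter> A \<noteq> {}"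
  shows "1 - \<alpha> \<le> measure (sample_dist D m) {S \<in> space (sample_dist D m). 1 - \<alpha> \<le> pl_boot L h m S \<epsilon> A}"
proof -
  interpret prob_space "sample_dist D m"
    using D by (rule prob_space_sample_dist)
  have "unif_dev_event D L h m (\<epsilon> / 2) \<subseteq> {S \<in> space (sample_dist D m). 1 - \<alpha> \<le> pl_boot L h m S \<epsilon> A}"
  proof
    fix S assume S: "S \<in> unif_dev_event D L h m (\<epsilon> / 2)"
    then have "S \<in> space (sample_dist D m)"
      by (simp add: unif_dev_event_def)
    then have "1 - \<alpha> \<le> measure_pmf.prob (boot_dist m S) (boot_dev_event L h m S (\<epsilon> / 2))"
      using acc by (simp add: suc_accuracy_def)
    also have "\<dots> \<le> pl_boot L h m S \<epsilon> A"
    proof (rule prob_le_pl_boot)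
      fix S' assume "S' \<in> set_pmf (boot_dist m S)" and S': "S' \<in> boot_dev_event L h m S (\<epsilon> / 2)"
      moreover have "\<bar>risk L h D \<theta> - emp_risk L h m S' \<theta>\<bar> \<le> \<epsilon>" for \<theta>
      proof -
        have "\<bar>risk L h D \<theta> - emp_risk L h m S \<theta>\<bar> \<le> \<epsilon> / 2"
          "\<bar>emp_risk L h m S \<theta> - emp_risk L h m S' \<theta>\<bar> \<le> \<epsilon> / 2"
          using S S' by (simp_all add: unif_dev_event_def boot_dev_event_def)
        then show ?thesis
          by linarith
      qed
      ultimately show "emp_eps_set L h m S' \<epsilon> \<inter> A \<noteq> {}"
        using good \<open>S \<in> space (sample_dist D m)\<close> by blast
    qed
    finally show "S \<in> {S \<in> space (sample_dist D m). 1 - \<alpha> \<le> pl_boot L h m S \<epsilon> A}"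
      using \<open>S \<in> space (sample_dist D m)\<close> by simp
  qed
  then have "measure (sample_dist D m) (unif_dev_event D L h m (\<epsilon> / 2))
      \<le> measure (sample_dist D m) {S \<in> space (sample_dist D m). 1 - \<alpha> \<le> pl_boot L h m S \<epsilon> A}"
    using meas by (rule finite_measure_mono)
  then show ?thesis
    using acc by (simp add: suc_accuracy_def)
qed

lemma bootstrap_plausibility_a:
  assumes D: "prob_space D" and "0 < \<alpha>" "0 < \<delta>" and suc: "has_suc D L h"
    and meas_dev: "\<And>m c. unif_dev_event D L h m c \<in> sets (sample_dist D m)"
    and meas: "\<And>m. {S \<in> space (sample_dist D m).
      1 - \<alpha> \<le> pl_boot L h m S (real_of_ereal (eps_a (suc_fun D L h) m \<alpha>)) A} \<in> sets (sample_dist D m)"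
    and A: "near_argmin (risk L h D) \<delta> \<subseteq> A"
    and min: "\<And>\<theta>. risk L h D \<theta>0 \<le> risk L h D \<theta>"
    and emp_min: "\<And>m S. S \<in> space (sample_dist D m) \<Longrightarrow> \<exists>t. \<forall>\<theta>. emp_risk L h m S t \<le> emp_risk L h m S \<theta>"
  defines "P m \<equiv> measure (sample_dist D m) {S \<in> space (sample_dist D m).
      1 - \<alpha> \<le> pl_boot L h m S (real_of_ereal (eps_a (suc_fun D L h) m \<alpha>)) A}"
  shows "ereal (1 - \<alpha>) \<le> liminf (\<lambda>m. ereal (P m))"
    and "eps_a (suc_fun D L h) m \<alpha> \<le> ereal \<delta> \<Longrightarrow> 1 - \<alpha> \<le> P m"
proof -
  have bound: "1 - \<alpha> \<le> P m" if le: "eps_a (suc_fun D L h) m \<alpha> \<le> ereal \<delta>" for m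
  proof -
    obtain \<epsilon> where eps: "eps_a (suc_fun D L h) m \<alpha> = ereal \<epsilon>"
      using le eps_a_nonneg[of "suc_fun D L h" m \<alpha>] by (cases "eps_a (suc_fun D L h) m \<alpha>") auto
    have "\<epsilon> \<le> \<delta>"
      using le eps by simp
    have "1 - \<alpha> \<le> measure (sample_dist D m) {S \<in> space (sample_dist D m). 1 - \<alpha> \<le> pl_boot L h m S \<epsilon> A}"
    proof (rule prob_pl_boot_ge_if_accuracy[OF D suc_accuracy_eps_a[OF D meas_dev eps \<open>0 < \<alpha>\<close>]])
      show "{S \<in> space (sample_dist D m). 1 - \<alpha> \<le> pl_boot L h m S \<epsilon> A} \<in> sets (sample_dist D m)"
        using meas[of m] eps by simp
    next
      fix S S' assume "S \<in> space (sample_dist D m)" "S' \<in> set_pmf (boot_dist m S)"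
        and close: "\<And>\<theta>. \<bar>risk L h D \<theta> - emp_risk L h m S' \<theta>\<bar> \<le> \<epsilon>"
      then obtain t where "\<And>\<theta>. emp_risk L h m S' t \<le> emp_risk L h m S' \<theta>"
        using emp_min boot_dist_in_space by blast
      with min show "emp_eps_set L h m S' \<epsilon> \<inter> A \<noteq> {}"
        unfolding emp_eps_set_eq_near_argmin
        using close \<open>\<epsilon> \<le> \<delta>\<close> A by (rule near_argmin_meets_if_minimizers)
    qed
    then show ?thesis
      using eps by (simp add: P_def)
  qed
  show "ereal (1 - \<alpha>) \<le> liminf (\<lambda>m. ereal (P m))"
    using bound eventually_eps_a_le[OF suc \<open>0 < \<delta>\<close>] by (rule liminf_ge_if_eventually)
  show "eps_a (suc_fun D L h) m \<alpha> \<le> ereal \<delta> \<Longrightarrow> 1 - \<alpha> \<le> P m"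
    by (rule bound)
qed

section \<open>Anticoncentration of the bootstrap\<close>

lemma Suc_times_central_binomial:
  "Suc k * (2 * Suc k choose Suc k) = 2 * (2 * k + 1) * (2 * k choose k)"
proof -
  have "Suc k * (2 * Suc k choose Suc k) = 2 * Suc k * (Suc (2 * k) choose k)"
    using Suc_times_binomial[of k "Suc (2 * k)"] by simp
  also have "Suc (2 * k) choose k = Suc (2 * k) choose Suc k"
    using binomial_symmetric[of k "Suc (2 * k)"] by simp
  finally have "Suc k * (2 * Suc k choose Suc k) = 2 * (Suc k * (Suc (2 * k) choose Suc k))"
    by simp
  then show ?thesis
    using Suc_times_binomial[of k "2 * k"] by simp
qed

lemma central_binomial_upper_bound: "(2 * k choose k)\<^sup>2 * (2 * k + 1) \<le> 16 ^ k"
proof (induction k)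
  case 0
  then show ?case by simp
next
  case (Suc k)
  define c c' where "c = 2 * k choose k" and "c' = 2 * Suc k choose Suc k"
  have "(Suc k)\<^sup>2 * (c'\<^sup>2 * (2 * k + 3)) = (Suc k * c')\<^sup>2 * (2 * k + 3)"
    by algebra
  also have "\<dots> = 4 * (2 * k + 1) * (2 * k + 3) * (c\<^sup>2 * (2 * k + 1))"
    unfolding c_def c'_def Suc_times_central_binomial by algebra
  also have "\<dots> \<le> 4 * (2 * k + 1) * (2 * k + 3) * 16 ^ k"
    using Suc.IH by (simp add: c_def)
  also have "\<dots> \<le> (Suc k)\<^sup>2 * 16 ^ Suc k"
    by (simp add: power2_eq_square algebra_simps)
  finally have "c'\<^sup>2 * (2 * k + 3) \<le> 16 ^ Suc k"
    by (simp only: mult_le_cancel1) simp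
  then show ?case
    unfolding c'_def [symmetric] by (simp add: algebra_simps)
qed

lemma exists_central_binomial_prob_less:
  fixes p :: real
  assumes "0 < p"
  obtains k where "m \<le> k" "0 < k" "real (2 * k choose k) / 4 ^ k < p"
proof -
  obtain n where n: "1 / p\<^sup>2 < real n"
    using reals_Archimedean2 by blast
  define k where "k = m + n + 1"
  have "real ((2 * k choose k)\<^sup>2 * (2 * k + 1)) \<le> real (16 ^ k)"
    by (rule of_nat_mono[OF central_binomial_upper_bound])
  moreover have "((4::real) ^ k)\<^sup>2 = 16 ^ k"
    by (simp add: power2_eq_square flip: power_mult_distrib)
  ultimately have "(real (2 * k choose k) / 4 ^ k)\<^sup>2 * (2 * k + 1) \<le> 1"
    by (simp only: power_divide of_nat_mult of_nat_power) simp
  moreover have "1 < p\<^sup>2 * (2 * k + 1)"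
  proof -
    have "1 / p\<^sup>2 < 2 * k + 1"
      using n unfolding k_def by simp
    then show ?thesis
      using assms by (metis divide_less_eq mult.commute zero_less_power2 order_less_irrefl)
  qed
  ultimately have "(real (2 * k choose k) / 4 ^ k)\<^sup>2 * (2 * k + 1) < p\<^sup>2 * (2 * k + 1)"
    by linarith
  then have "(real (2 * k choose k) / 4 ^ k)\<^sup>2 < p\<^sup>2"
    by (rule mult_right_less_imp_less) simp
  then have "real (2 * k choose k) / 4 ^ k < p"
    using assms by (simp add: power_less_imp_less_base)
  moreover have "m \<le> k" "0 < k"
    by (simp_all add: k_def)
  ultimately show ?thesis
    using that by blast
qed

definition two_point_sample :: "nat \<Rightarrow> 'z \<Rightarrow> 'z \<Rightarrow> nat \<Rightarrow> 'z" where
  "two_point_sample k z1 z2 = (\<lambda>i. if i < k then z1 else if i < 2 * k then z2 else undefined)"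

lemma card_two_point_sample_first:
  assumes "z1 \<noteq> z2"
  shows "card ({..<2 * k} \<inter> {i. (two_point_sample k z1 z2 i = z1) = b}) = k"
proof -
  have "{..<2 * k} \<inter> {i. (two_point_sample k z1 z2 i = z1) = b} = (if b then {..<k} else {k..<2 * k})"
    using assms by (auto simp: two_point_sample_def)
  then show ?thesis by simp
qed

lemma map_unif_two_point_sample_bernoulli:
  assumes "z1 \<noteq> z2" "k > 0"
  shows "map_pmf (\<lambda>z. z = z1) (unif_sample (2 * k) (two_point_sample k z1 z2)) = bernoulli_pmf (1 / 2)"
proof (rule pmf_eqI)
  fix b
  have "pmf (map_pmf (\<lambda>z. z = z1) (unif_sample (2 * k) (two_point_sample k z1 z2))) b
      = measure_pmf.prob (pmf_of_set {..<2 * k}) {i. (two_point_sample k z1 z2 i = z1) = b}"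
    by (simp add: unif_sample_def map_pmf_comp pmf_map vimage_def)
  also have "\<dots> = card ({..<2 * k} \<inter> {i. (two_point_sample k z1 z2 i = z1) = b}) / card {..<2 * k}"
    using assms(2) by (intro measure_pmf_of_set) (auto simp: lessThan_empty_iff)
  also have "\<dots> = pmf (bernoulli_pmf (1 / 2)) b"
    using assms by (simp add: card_two_point_sample_first)
  finally show "pmf (map_pmf (\<lambda>z. z = z1) (unif_sample (2 * k) (two_point_sample k z1 z2))) b
      = pmf (bernoulli_pmf (1 / 2)) b" .
qed

lemma map_boot_two_point_count_binomial:
  assumes "z1 \<noteq> z2" "k > 0"
  shows "map_pmf (\<lambda>T. card {i \<in> {..<2 * k}. T i = z1}) (boot_dist (2 * k) (two_point_sample k z1 z2))
    = binomial_pmf (2 * k) (1 / 2)"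
proof -
  have "binomial_pmf (2 * k) (1 / 2) = map_pmf (\<lambda>f. card {i \<in> {..<2 * k}. f i})
      (Pi_pmf {..<2 * k} (undefined = z1) (\<lambda>_. bernoulli_pmf (1 / 2)))"
    by (rule binomial_pmf_altdef') auto
  also have "Pi_pmf {..<2 * k} (undefined = z1) (\<lambda>_. bernoulli_pmf (1 / 2))
      = map_pmf ((\<circ>) (\<lambda>z. z = z1)) (boot_dist (2 * k) (two_point_sample k z1 z2))"
    unfolding boot_dist_def map_unif_two_point_sample_bernoulli[OF assms, symmetric]
    by (rule Pi_pmf_map) auto
  finally show ?thesis
    by (simp add: map_pmf_comp)
qed

lemma sum_two_valued:
  fixes \<phi> :: "'z \<Rightarrow> real" and n :: nat
  assumes "\<And>i. i < n \<Longrightarrow> T i \<in> {z1, z2}"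
  shows "(\<Sum>i<n. \<phi> (T i)) = real n * \<phi> z2 + card {i \<in> {..<n}. T i = z1} * (\<phi> z1 - \<phi> z2)"
proof -
  have "(\<Sum>i<n. \<phi> (T i)) = (\<Sum>i<n. \<phi> z2 + (if T i = z1 then \<phi> z1 - \<phi> z2 else 0))"
    using assms by (intro sum.cong) auto
  then show ?thesis
    by (simp add: sum.distrib sum.inter_filter [symmetric])
qed

text \<open>The number of copies of z1 in a resample is Binomial(2k, 1/2), and the two sums differ by less
  than one jump only if it equals k.\<close>
lemma prob_boot_two_point_sum_close_le:
  fixes \<phi> :: "'z \<Rightarrow> real"
  assumes "\<phi> z1 \<noteq> \<phi> z2" "k > 0"
  defines "T \<equiv> two_point_sample k z1 z2"
  shows "measure_pmf.prob (boot_dist (2 * k) T)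
      {T'. \<bar>(\<Sum>i<2 * k. \<phi> (T' i)) - (\<Sum>i<2 * k. \<phi> (T i))\<bar> < \<bar>\<phi> z1 - \<phi> z2\<bar>}
    \<le> (2 * k choose k) / 4 ^ k"
    (is "measure_pmf.prob ?p ?E \<le> _")
proof -
  have "z1 \<noteq> z2"
    using assms(1) by auto
  define count where "count T' = card {i \<in> {..<2 * k}. T' i = z1}" for T' :: "nat \<Rightarrow> 'z"
  have T_vals: "T i \<in> {z1, z2}" if "i < 2 * k" for i
    using that by (simp add: T_def two_point_sample_def)
  have "count T = k"
    using card_two_point_sample_first[OF \<open>z1 \<noteq> z2\<close>, of k True]
    by (simp add: count_def T_def Int_def)
  have "count T' = k" if "T' \<in> ?E" "T' \<in> set_pmf ?p" for T'
  proof -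
    have "T' i \<in> {z1, z2}" if "i < 2 * k" for i
      using \<open>T' \<in> set_pmf ?p\<close> that T_vals assms(2) by (fastforce simp: set_pmf_boot_dist PiE_dflt_def)
    then have "(\<Sum>i<2 * k. \<phi> (T' i)) = real (2 * k) * \<phi> z2 + count T' * (\<phi> z1 - \<phi> z2)"
      unfolding count_def by (rule sum_two_valued)
    moreover have "(\<Sum>i<2 * k. \<phi> (T i)) = real (2 * k) * \<phi> z2 + count T * (\<phi> z1 - \<phi> z2)"
      unfolding count_def using T_vals by (rule sum_two_valued)
    ultimately have "(\<Sum>i<2 * k. \<phi> (T' i)) - (\<Sum>i<2 * k. \<phi> (T i)) = (real (count T') - k) * (\<phi> z1 - \<phi> z2)"
      using \<open>count T = k\<close> by (simp add: algebra_simps)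
    with \<open>T' \<in> ?E\<close> assms(1) have "\<bar>real (count T') - k\<bar> < 1"
      by (simp add: abs_mult mult_less_cancel_right2)
    then show ?thesis
      by linarith
  qed
  then have "measure_pmf.prob ?p ?E \<le> measure_pmf.prob ?p {T'. count T' = k}"
    by (subst measure_Int_set_pmf [symmetric]) (auto intro!: measure_pmf.finite_measure_mono)
  also have "\<dots> = pmf (map_pmf count ?p) k"
    by (simp add: pmf_map vimage_def)
  also have "\<dots> = pmf (binomial_pmf (2 * k) (1 / 2)) k"
    unfolding count_def T_def map_boot_two_point_count_binomial[OF \<open>z1 \<noteq> z2\<close> assms(2)] ..
  also have "\<dots> = (2 * k choose k) / 4 ^ k"
    by (simp add: power_divide flip: power_mult_distrib)
  finally show ?thesis .
qed

section \<open>Case (b): no minimisers\<close>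

lemma loss_bdd_below_if_boot_near_argmin:
  assumes boot: "\<And>S. S \<in> space (sample_dist D 1) \<Longrightarrow>
      0 < measure_pmf.prob (boot_dist 1 S) {S'. emp_eps_set L h 1 S' e \<noteq> {}}"
    and "z \<in> space D"
  shows "bdd_below (range (\<lambda>\<theta>. L (h (fst z) \<theta>) (snd z)))"
proof -
  define S where "S = (\<lambda>i::nat. if i = 0 then z else undefined)"
  have "S \<in> space (sample_dist D 1)"
    using \<open>z \<in> space D\<close> by (auto simp: S_def space_sample_dist split: if_splits)
  then obtain S' where S': "S' \<in> set_pmf (boot_dist 1 S)" "emp_eps_set L h 1 S' e \<noteq> {}"
    using boot exists_in_set_pmf_if_prob_pos by blast
  have "S' = S"
  proof
    fix i
    show "S' i = S i"
      using S'(1) by (cases "i = 0") (auto simp: set_pmf_boot_dist S_def PiE_dflt_def)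
  qed
  moreover have "emp_risk L h 1 S = (\<lambda>\<theta>. L (h (fst z) \<theta>) (snd z))"
    by (simp add: emp_risk_def S_def fun_eq_iff)
  ultimately show ?thesis
    using S'(2) bdd_below_if_near_argmin_nonempty by (metis emp_eps_set_eq_near_argmin)
qed

lemma emp_risk_bdd_below:
  assumes "\<And>z. z \<in> space D \<Longrightarrow> bdd_below (range (\<lambda>\<theta>. L (h (fst z) \<theta>) (snd z)))"
    and "S \<in> space (sample_dist D m)"
  shows "bdd_below (range (emp_risk L h m S))"
proof -
  obtain b where b: "\<And>z \<theta>. z \<in> space D \<Longrightarrow> b z \<le> L (h (fst z) \<theta>) (snd z)"
    using assms(1) unfolding bdd_below_def by (metis rangeI)
  have "(1 / m) * (\<Sum>i<m. b (S i)) \<le> emp_risk L h m S \<theta>" for \<theta>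
    unfolding emp_risk_def using assms(2)
    by (intro mult_left_mono sum_mono b) (auto simp: space_sample_dist)
  then show ?thesis
    by (intro bdd_belowI2)
qed

lemma emp_risk_eq_if_loss_const:
  assumes "\<And>z1 z2 \<theta>. z1 \<in> space D \<Longrightarrow> z2 \<in> space D \<Longrightarrow>
      L (h (fst z1) \<theta>) (snd z1) = L (h (fst z2) \<theta>) (snd z2)"
    and "S \<in> space (sample_dist D m)" "S' \<in> space (sample_dist D m)"
  shows "emp_risk L h m S = emp_risk L h m S'"
proof
  fix \<theta>
  have "(\<Sum>i<m. L (h (fst (S i)) \<theta>) (snd (S i))) = (\<Sum>i<m. L (h (fst (S' i)) \<theta>) (snd (S' i)))"
    using assms by (intro sum.cong refl assms(1)) (auto simp: space_sample_dist)
  then show "emp_risk L h m S \<theta> = emp_risk L h m S' \<theta>"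
    by (simp add: emp_risk_def)
qed

lemma sum_loss_close_if_boot_dev_event:
  assumes "T' \<in> boot_dev_event L h n T c"
  shows "\<bar>(\<Sum>i<n. L (h (fst (T' i)) \<theta>) (snd (T' i))) - (\<Sum>i<n. L (h (fst (T i)) \<theta>) (snd (T i)))\<bar>
    \<le> n * c"
proof (cases "n = 0")
  case False
  have "\<bar>emp_risk L h n T \<theta> - emp_risk L h n T' \<theta>\<bar> \<le> c"
    using assms by (simp add: boot_dev_event_def)
  then have "\<bar>(\<Sum>i<n. L (h (fst (T i)) \<theta>) (snd (T i))) - (\<Sum>i<n. L (h (fst (T' i)) \<theta>) (snd (T' i)))\<bar> / n \<le> c"
    by (simp add: emp_risk_def abs_divide flip: diff_divide_distrib)
  then show ?thesis
    using False by (simp add: divide_le_eq abs_minus_commute mult.commute)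
qed simp

text \<open>Since eps_b vanishes, the bootstrap condition holds at every accuracy c > 0 for all large
  sample sizes; but the resample of k copies of z1 and k copies of z2 reproduces the empirical risk
  at a parameter where the two losses differ only with probability at most C(2k,k)/4^k.\<close>
lemma loss_const_if_eps_b_zero:
  assumes D: "prob_space D" and "0 < \<alpha>" "\<alpha> < 1"
    and meas_dev: "\<And>m c. unif_dev_event D L h m c \<in> sets (sample_dist D m)"
    and eps: "eps_b (suc_fun D L h) m \<alpha> = 0"
    and z: "z1 \<in> space D" "z2 \<in> space D"
  shows "L (h (fst z1) \<theta>) (snd z1) = L (h (fst z2) \<theta>) (snd z2)"
proof (rule ccontr)
  define \<phi> where "\<phi> z = L (h (fst z) \<theta>) (snd z)" for z
  assume "L (h (fst z1) \<theta>) (snd z1) \<noteq> L (h (fst z2) \<theta>) (snd z2)"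
  then have "\<phi> z1 \<noteq> \<phi> z2"
    by (simp add: \<phi>_def)
  then have "0 < \<bar>\<phi> z1 - \<phi> z2\<bar>"
    by simp
  obtain k where "m \<le> k" "0 < k" and small: "real (2 * k choose k) / 4 ^ k < 1 - \<alpha>"
    using exists_central_binomial_prob_less \<open>\<alpha> < 1\<close> by (metis diff_gt_0_iff_gt)
  define T where "T = two_point_sample k z1 z2"
  have T: "T \<in> space (sample_dist D (2 * k))"
    using z by (auto simp: T_def two_point_sample_def space_sample_dist split: if_splits)
  define c where "c = \<bar>\<phi> z1 - \<phi> z2\<bar> / (4 * k)"
  have "0 < c"
    using \<open>0 < \<bar>\<phi> z1 - \<phi> z2\<bar>\<close> \<open>0 < k\<close> by (simp add: c_def)
  have "suc_accuracy D L h \<alpha> c (2 * k)"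
    using \<open>m \<le> k\<close> \<open>0 < c\<close> eps \<open>0 < \<alpha>\<close>
    by (intro suc_accuracy_above_eps_b[OF D meas_dev, where \<epsilon> = 0]) (auto simp: zero_ereal_def)
  then have "1 - \<alpha> \<le> measure_pmf.prob (boot_dist (2 * k) T) (boot_dev_event L h (2 * k) T c)"
    using T by (simp add: suc_accuracy_def)
  also have "\<dots> \<le> measure_pmf.prob (boot_dist (2 * k) T)
      {T'. \<bar>(\<Sum>i<2 * k. \<phi> (T' i)) - (\<Sum>i<2 * k. \<phi> (T i))\<bar> < \<bar>\<phi> z1 - \<phi> z2\<bar>}"
  proof (intro measure_pmf.finite_measure_mono subsetI CollectI)
    fix T' assume "T' \<in> boot_dev_event L h (2 * k) T c"
    then have "\<bar>(\<Sum>i<2 * k. \<phi> (T' i)) - (\<Sum>i<2 * k. \<phi> (T i))\<bar> \<le> 2 * k * c"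
      unfolding \<phi>_def by (rule sum_loss_close_if_boot_dev_event)
    also have "\<dots> < \<bar>\<phi> z1 - \<phi> z2\<bar>"
      using \<open>0 < k\<close> \<open>\<phi> z1 \<noteq> \<phi> z2\<close> by (simp add: c_def)
    finally show "\<bar>(\<Sum>i<2 * k. \<phi> (T' i)) - (\<Sum>i<2 * k. \<phi> (T i))\<bar> < \<bar>\<phi> z1 - \<phi> z2\<bar>" .
  qed simp
  also have "\<dots> \<le> real (2 * k choose k) / 4 ^ k"
    unfolding T_def using \<open>\<phi> z1 \<noteq> \<phi> z2\<close> \<open>0 < k\<close> by (rule prob_boot_two_point_sum_close_le)
  finally show False
    using small by simp
qed

lemma emp_risk_minimizer_if_eps_b_zero:
  assumes D: "prob_space D" and "0 < \<alpha>" "\<alpha> < 1"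
    and meas_dev: "\<And>m c. unif_dev_event D L h m c \<in> sets (sample_dist D m)"
    and eps: "eps_b (suc_fun D L h) m \<alpha> = 0"
    and boot: "0 < measure_pmf.prob (boot_dist m S) {S'. emp_eps_set L h m S' 0 \<noteq> {}}"
    and S: "S \<in> space (sample_dist D m)"
  obtains t where "\<And>\<theta>. emp_risk L h m S t \<le> emp_risk L h m S \<theta>"
proof -
  obtain S' where S': "S' \<in> set_pmf (boot_dist m S)" "S' \<in> {S'. emp_eps_set L h m S' 0 \<noteq> {}}"
    using boot by (rule exists_in_set_pmf_if_prob_pos)
  have "near_argmin (emp_risk L h m S') 0 \<noteq> {}"
    using S'(2) by (simp add: emp_eps_set_eq_near_argmin)
  then obtain t where "\<forall>\<theta>. emp_risk L h m S' t \<le> emp_risk L h m S' \<theta>"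
    unfolding near_argmin_zero_nonempty_iff by blast
  moreover have "emp_risk L h m S' = emp_risk L h m S"
    using loss_const_if_eps_b_zero[OF D \<open>0 < \<alpha>\<close> \<open>\<alpha> < 1\<close> meas_dev eps] boot_dist_in_space[OF S S'(1)] S
    by (rule emp_risk_eq_if_loss_const)
  ultimately show ?thesis
    using that by auto
qed

lemma emp_eps_set_meets_if_close_eps_b:
  assumes D: "prob_space D" and "0 < \<alpha>" "\<alpha> < 1"
    and meas_dev: "\<And>m c. unif_dev_event D L h m c \<in> sets (sample_dist D m)"
    and boot: "\<And>m S. S \<in> space (sample_dist D m) \<Longrightarrow> 0 < measure_pmf.prob (boot_dist m S)
      {S'. emp_eps_set L h m S' (real_of_ereal (eps_b (suc_fun D L h) m \<alpha>)) \<noteq> {}}"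
    and A: "near_argmin (risk L h D) \<delta> \<subseteq> A"
    and eps: "eps_b (suc_fun D L h) m \<alpha> = ereal \<epsilon>" and "2 * \<epsilon> \<le> \<delta>"
    and S: "S \<in> space (sample_dist D m)"
    and close: "\<And>\<theta>. \<bar>risk L h D \<theta> - emp_risk L h m S \<theta>\<bar> \<le> \<epsilon>"
  shows "emp_eps_set L h m S \<epsilon> \<inter> A \<noteq> {}"
  unfolding emp_eps_set_eq_near_argmin
proof (cases "\<epsilon> = 0")
  case False
  have "bdd_below (range (emp_risk L h m S))"
    using loss_bdd_below_if_boot_near_argmin[OF boot] S by (rule emp_risk_bdd_below)
  moreover have "\<bar>emp_risk L h m S \<theta> - risk L h D \<theta>\<bar> \<le> \<epsilon>" for \<theta>
    using close[of \<theta>] by (simp add: abs_minus_commute)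
  ultimately have "bdd_below (range (risk L h D))"
    by (rule bdd_below_range_if_close)
  moreover have "0 \<le> \<epsilon>"
    using eps eps_b_nonneg[of "suc_fun D L h" m \<alpha>] by simp
  ultimately show "near_argmin (emp_risk L h m S) \<epsilon> \<inter> A \<noteq> {}"
    using close False \<open>2 * \<epsilon> \<le> \<delta>\<close> A by (intro near_argmin_meets_if_bdd_below) auto
next
  case True
  have "eps_b (suc_fun D L h) m \<alpha> = 0" "0 < measure_pmf.prob (boot_dist m S) {S'. emp_eps_set L h m S' 0 \<noteq> {}}"
    using eps True boot[OF S] by (simp_all add: zero_ereal_def)
  then obtain t where t: "\<And>\<theta>. emp_risk L h m S t \<le> emp_risk L h m S \<theta>"
    using emp_risk_minimizer_if_eps_b_zero[OF D \<open>0 < \<alpha>\<close> \<open>\<alpha> < 1\<close> meas_dev _ _ S] by blast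
  have "risk L h D = emp_risk L h m S"
    using close True by fastforce
  then show "near_argmin (emp_risk L h m S) \<epsilon> \<inter> A \<noteq> {}"
    using t close \<open>2 * \<epsilon> \<le> \<delta>\<close> True A by (intro near_argmin_meets_if_minimizers[where t = t]) auto
qed

lemma bootstrap_plausibility_b:
  assumes D: "prob_space D" and "0 < \<alpha>" "0 < \<delta>" and suc: "has_suc D L h"
    and meas_dev: "\<And>m c. unif_dev_event D L h m c \<in> sets (sample_dist D m)"
    and meas: "\<And>m. {S \<in> space (sample_dist D m).
      1 - \<alpha> \<le> pl_boot L h m S (real_of_ereal (eps_b (suc_fun D L h) m \<alpha>)) A} \<in> sets (sample_dist D m)"
    and A: "near_argmin (risk L h D) \<delta> \<subseteq> A"
    and boot: "\<And>m S. S \<in> space (sample_dist D m) \<Longrightarrow> 0 < measure_pmf.prob (boot_dist m S)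
      {S'. emp_eps_set L h m S' (real_of_ereal (eps_b (suc_fun D L h) m \<alpha>)) \<noteq> {}}"
  defines "P m \<equiv> measure (sample_dist D m) {S \<in> space (sample_dist D m).
      1 - \<alpha> \<le> pl_boot L h m S (real_of_ereal (eps_b (suc_fun D L h) m \<alpha>)) A}"
  shows "ereal (1 - \<alpha>) \<le> liminf (\<lambda>m. ereal (P m))"
    and "eps_b (suc_fun D L h) m \<alpha> \<le> ereal (\<delta> / 2) \<Longrightarrow> 1 - \<alpha> \<le> P m"
proof -
  have bound: "1 - \<alpha> \<le> P m" if le: "eps_b (suc_fun D L h) m \<alpha> \<le> ereal (\<delta> / 2)" for m
  proof (cases "\<alpha> < 1")
    case False
    then show ?thesis
      unfolding P_def by (smt (verit) measure_nonneg)
  next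
    case True
    obtain \<epsilon> where eps: "eps_b (suc_fun D L h) m \<alpha> = ereal \<epsilon>"
      using le eps_b_nonneg[of "suc_fun D L h" m \<alpha>] by (cases "eps_b (suc_fun D L h) m \<alpha>") auto
    have "2 * \<epsilon> \<le> \<delta>"
      using le eps by simp
    have "1 - \<alpha> \<le> measure (sample_dist D m) {S \<in> space (sample_dist D m). 1 - \<alpha> \<le> pl_boot L h m S \<epsilon> A}"
    proof (rule prob_pl_boot_ge_if_accuracy[OF D suc_accuracy_eps_b[OF D meas_dev eps \<open>0 < \<alpha>\<close>]])
      show "{S \<in> space (sample_dist D m). 1 - \<alpha> \<le> pl_boot L h m S \<epsilon> A} \<in> sets (sample_dist D m)"
        using meas[of m] eps by simp
    next
      fix S S' assume "S \<in> space (sample_dist D m)" "S' \<in> set_pmf (boot_dist m S)"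
        and "\<And>\<theta>. \<bar>risk L h D \<theta> - emp_risk L h m S' \<theta>\<bar> \<le> \<epsilon>"
      then show "emp_eps_set L h m S' \<epsilon> \<inter> A \<noteq> {}"
        using emp_eps_set_meets_if_close_eps_b[OF D \<open>0 < \<alpha>\<close> True meas_dev boot A eps \<open>2 * \<epsilon> \<le> \<delta>\<close>]
          boot_dist_in_space by blast
    qed
    then show ?thesis
      using eps by (simp add: P_def)
  qed
  show "ereal (1 - \<alpha>) \<le> liminf (\<lambda>m. ereal (P m))"
    using bound eventually_eps_b_le[OF suc half_gt_zero[OF \<open>0 < \<delta>\<close>]] by (rule liminf_ge_if_eventually)
  show "eps_b (suc_fun D L h) m \<alpha> \<le> ereal (\<delta> / 2) \<Longrightarrow> 1 - \<alpha> \<le> P m"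
    by (rule bound)
qed

theorem theorem4:
  fixes D :: "('x \<times> 'y) measure"
    and L :: "'y \<Rightarrow> 'y \<Rightarrow> real"
    and h :: "'x \<Rightarrow> 'p::topological_space \<Rightarrow> 'y"
    and A :: "'p set"
    and \<delta> \<alpha> :: real
  assumes D: "prob_space D"
    and integrable: "\<And>th. integrable D (\<lambda>z. L (h (fst z) th) (snd z))"
    and A_borel: "A \<in> sets borel"
    and \<delta>_pos: "\<delta> > 0"
    and A_sup: "risk_delta_set L h D \<delta> \<subseteq> A"
    and suc: "has_suc D L h"
    and \<alpha>_pos: "\<alpha> > 0"
    and meas_unif: "\<And>m eps. {S \<in> space (sample_dist D m).
          \<forall>th. \<bar>risk L h D th - emp_risk L h m S th\<bar> \<le> eps} \<in> sets (sample_dist D m)"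
    and meas_a: "\<And>m. {S \<in> space (sample_dist D m).
          pl_boot L h m S (real_of_ereal (eps_a (suc_fun D L h) m \<alpha>)) A \<ge> 1 - \<alpha>}
          \<in> sets (sample_dist D m)"
    and meas_b: "\<And>m. {S \<in> space (sample_dist D m).
          pl_boot L h m S (real_of_ereal (eps_b (suc_fun D L h) m \<alpha>)) A \<ge> 1 - \<alpha>}
          \<in> sets (sample_dist D m)"
  shows
    "((\<exists>th0. \<forall>th. risk L h D th0 \<le> risk L h D th)
       \<and> (\<forall>m. \<forall>S \<in> space (sample_dist D m). \<exists>th. \<forall>th'. emp_risk L h m S th \<le> emp_risk L h m S th')
      \<longrightarrow>
       liminf (\<lambda>m. ereal (measure (sample_dist D m) {S \<in> space (sample_dist D m).
           pl_boot L h m S (real_of_ereal (eps_a (suc_fun D L h) m \<alpha>)) A \<ge> 1 - \<alpha>}))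
         \<ge> ereal (1 - \<alpha>)
     \<and> (\<forall>m. eps_a (suc_fun D L h) m \<alpha> \<le> ereal \<delta> \<longrightarrow>
         measure (sample_dist D m) {S \<in> space (sample_dist D m).
           pl_boot L h m S (real_of_ereal (eps_a (suc_fun D L h) m \<alpha>)) A \<ge> 1 - \<alpha>} \<ge> 1 - \<alpha>))
   \<and>
    ((\<forall>m. \<forall>S \<in> space (sample_dist D m).
        measure_pmf.prob (boot_dist m S)
          {S'. emp_eps_set L h m S' (real_of_ereal (eps_b (suc_fun D L h) m \<alpha>)) \<noteq> {}} > 0)
      \<longrightarrow>
       liminf (\<lambda>m. ereal (measure (sample_dist D m) {S \<in> space (sample_dist D m).
           pl_boot L h m S (real_of_ereal (eps_b (suc_fun D L h) m \<alpha>)) A \<ge> 1 - \<alpha>}))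
         \<ge> ereal (1 - \<alpha>)
     \<and> (\<forall>m. eps_b (suc_fun D L h) m \<alpha> \<le> ereal (\<delta> / 2) \<longrightarrow>
         measure (sample_dist D m) {S \<in> space (sample_dist D m).
           pl_boot L h m S (real_of_ereal (eps_b (suc_fun D L h) m \<alpha>)) A \<ge> 1 - \<alpha>} \<ge> 1 - \<alpha>))"
proof -
  have A: "near_argmin (risk L h D) \<delta> \<subseteq> A"
    using A_sup by (simp add: risk_delta_set_eq_near_argmin)
  have meas_dev: "\<And>m c. unif_dev_event D L h m c \<in> sets (sample_dist D m)"
    using meas_unif by (simp add: unif_dev_event_def)
  note case_a = bootstrap_plausibility_a[OF D \<alpha>_pos \<delta>_pos suc meas_dev meas_a A]
  note case_b = bootstrap_plausibility_b[OF D \<alpha>_pos \<delta>_pos suc meas_dev meas_b A]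
  show ?thesis
    using case_a case_b by blast
qed

end
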